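(* Under the standing assumptions below, one of the following holds: either there exist a fixed $a'_1\in M'$ and a map $v_1:N\to N'$ such that $\phi\left(\left[\begin{smallmatrix} 1 & 0\\ n & 0\end{smallmatrix}\right]\right)=\left[\begin{smallmatrix} 1 & a'_1\\ v_1(n) & 0\end{smallmatrix}\right]$ for all $n\in N$; or there exist a fixed $b'_2\in N'$ and a map $u_2:N\to M'$ such that $\phi\left(\left[\begin{smallmatrix} 1 & 0\\ n & 0\end{smallmatrix}\right]\right)=\left[\begin{smallmatrix} 0 & u_2(n)\\ b'_2 & 1\end{smallmatrix}\right]$ for all $n\in N$.
   Context: All rings have an identity $1\neq 0$. Standing assumptions: $R,S,R',S'$ are rings whose only idempotents are $0$ and $1$; $M$ is an $R$-$S$-bimodule, $N$ an $S$-$R$-bimodule, $M'$ an $R'$-$S'$-bimodule, $N'$ an $S'$-$R'$-bimodule; $T=\left[\begin{smallmatrix} R & M\\ N & S\end{smallmatrix}\right]$ and $T'=\left[\begin{smallmatrix} R' & M'\\ N' & S'\end{smallmatrix}\right]$ are the Morita context rings with both Morita maps zero, i.e. the sets of formal matrices with entrywise addition and product $\left[\begin{smallmatrix} r & m\\ n & s\end{smallmatrix}\right]\left[\begin{smallmatrix} r' & m'\\ n' & s'\end{smallmatrix}\right]=\left[\begin{smallmatrix} rr' & rm'+ms'\\ nr'+sn' & ss'\end{smallmatrix}\right]$; and $\phi:T\to T'$ is a ring isomorphism. *)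

theory Defs
  imports Main
begin

text \<open>Elements of a Morita context ring with zero Morita maps are represented
as quadruples (r, m, n, s), standing for the formal matrix [[r, m], [n, s]].\<close>

definition only_trivial_idempotents :: "'a::ring_1 itself \<Rightarrow> bool" where
  "only_trivial_idempotents _ \<longleftrightarrow> (\<forall>e::'a. e * e = e \<longrightarrow> e = 0 \<or> e = 1)"

definition bimodule ::
  "('r::ring_1 \<Rightarrow> 'm::ab_group_add \<Rightarrow> 'm) \<Rightarrow> ('m \<Rightarrow> 's::ring_1 \<Rightarrow> 'm) \<Rightarrow> bool" where
  "bimodule lm rm \<longleftrightarrow>
     (\<forall>r x y. lm r (x + y) = lm r x + lm r y) \<and>
     (\<forall>r r' x. lm (r + r') x = lm r x + lm r' x) \<and>
     (\<forall>r r' x. lm (r * r') x = lm r (lm r' x)) \<and>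
     (\<forall>x. lm 1 x = x) \<and>
     (\<forall>s x y. rm (x + y) s = rm x s + rm y s) \<and>
     (\<forall>s s' x. rm x (s + s') = rm x s + rm x s') \<and>
     (\<forall>s s' x. rm x (s * s') = rm (rm x s) s') \<and>
     (\<forall>x. rm x 1 = x) \<and>
     (\<forall>r x s. rm (lm r x) s = lm r (rm x s))"

definition mc_add ::
  "('r::ring_1 \<times> 'm::ab_group_add \<times> 'n::ab_group_add \<times> 's::ring_1)
   \<Rightarrow> ('r \<times> 'm \<times> 'n \<times> 's) \<Rightarrow> ('r \<times> 'm \<times> 'n \<times> 's)" where
  "mc_add A B = (case A of (r, m, n, s) \<Rightarrow> case B of (r', m', n', s') \<Rightarrow>
      (r + r', m + m', n + n', s + s'))"

text \<open>Product in the Morita context ring with both Morita maps zero.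
  lmM: R acting on M (left), rmM: S acting on M (right),
  lmN: S acting on N (left), rmN: R acting on N (right).\<close>
definition mc_mult ::
  "('r::ring_1 \<Rightarrow> 'm::ab_group_add \<Rightarrow> 'm) \<Rightarrow> ('m \<Rightarrow> 's::ring_1 \<Rightarrow> 'm) \<Rightarrow>
   ('s \<Rightarrow> 'n::ab_group_add \<Rightarrow> 'n) \<Rightarrow> ('n \<Rightarrow> 'r \<Rightarrow> 'n) \<Rightarrow>
   ('r \<times> 'm \<times> 'n \<times> 's) \<Rightarrow> ('r \<times> 'm \<times> 'n \<times> 's) \<Rightarrow> ('r \<times> 'm \<times> 'n \<times> 's)" where
  "mc_mult lmM rmM lmN rmN A B = (case A of (r, m, n, s) \<Rightarrow> case B of (r', m', n', s') \<Rightarrow>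
      (r * r', lmM r m' + rmM m s', rmN n r' + lmN s n', s * s'))"

definition mc_one :: "'r::ring_1 \<times> 'm::ab_group_add \<times> 'n::ab_group_add \<times> 's::ring_1" where
  "mc_one = (1, 0, 0, 1)"

definition mc_ring_iso ::
  "('r::ring_1 \<Rightarrow> 'm::ab_group_add \<Rightarrow> 'm) \<Rightarrow> ('m \<Rightarrow> 's::ring_1 \<Rightarrow> 'm) \<Rightarrow>
   ('s \<Rightarrow> 'n::ab_group_add \<Rightarrow> 'n) \<Rightarrow> ('n \<Rightarrow> 'r \<Rightarrow> 'n) \<Rightarrow>
   ('r2::ring_1 \<Rightarrow> 'm2::ab_group_add \<Rightarrow> 'm2) \<Rightarrow> ('m2 \<Rightarrow> 's2::ring_1 \<Rightarrow> 'm2) \<Rightarrow>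
   ('s2 \<Rightarrow> 'n2::ab_group_add \<Rightarrow> 'n2) \<Rightarrow> ('n2 \<Rightarrow> 'r2 \<Rightarrow> 'n2) \<Rightarrow>
   (('r \<times> 'm \<times> 'n \<times> 's) \<Rightarrow> ('r2 \<times> 'm2 \<times> 'n2 \<times> 's2)) \<Rightarrow> bool" where
  "mc_ring_iso lmM rmM lmN rmN lmM' rmM' lmN' rmN' phi \<longleftrightarrow>
     bij phi \<and>
     (\<forall>A B. phi (mc_add A B) = mc_add (phi A) (phi B)) \<and>
     (\<forall>A B. phi (mc_mult lmM rmM lmN rmN A B) = mc_mult lmM' rmM' lmN' rmN' (phi A) (phi B)) \<and>
     phi mc_one = mc_one"

end

theory Submission
  imports Defs
begin

(* Let E = [[1,0],[0,0]] and X_n = [[0,0],[n,0]] in T, so that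
   [[1,0],[n,0]] = E + X_n, E is idempotent, E X_n = 0 and X_n E = X_n.
   The image phi(E) = [[r,m],[k,s]] is again idempotent, hence r and s are
   idempotents of R' and S', i.e. 0 or 1.  Since E is neither 0 nor 1 and phi
   is injective, phi(E) is neither 0 nor 1; an idempotent with diagonal (0,0)
   or (1,1) is forced to be 0 or 1, so the diagonal of phi(E) is (1,0) or
   (0,1).  In the first case the relations phi(E) Y = 0 and Y phi(E) = Y for
   Y = phi(X_n) force Y = [[0,0],[y,0]]; in the second case they force
   Y = [[0,u],[0,0]].  Adding phi(E) and phi(X_n) gives the two alternatives. *)

lemma bimodule_zero_one:
  assumes "bimodule lm rm"
  shows "lm r 0 = 0" "lm 0 x = 0" "rm 0 s = 0" "rm x 0 = 0" "lm 1 x = x" "rm x 1 = x"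
proof -
  have "lm r (0 + 0) = lm r 0 + lm r 0" using assms unfolding bimodule_def by metis
  thus "lm r 0 = 0" by simp
  have "lm (0 + 0) x = lm 0 x + lm 0 x" using assms unfolding bimodule_def by metis
  thus "lm 0 x = 0" by simp
  have "rm (0 + 0) s = rm 0 s + rm 0 s" using assms unfolding bimodule_def by metis
  thus "rm 0 s = 0" by simp
  have "rm x (0 + 0) = rm x 0 + rm x 0" using assms unfolding bimodule_def by metis
  thus "rm x 0 = 0" by simp
  show "lm 1 x = x" "rm x 1 = x" using assms unfolding bimodule_def by blast+
qed

lemma mc_ring_iso_zero:
  assumes "mc_ring_iso lmM rmM lmN rmN lmM' rmM' lmN' rmN' phi"
  shows "phi (0, 0, 0, 0) = (0, 0, 0, 0)"
proof -
  obtain a b c d where img: "phi (0, 0, 0, 0) = (a, b, c, d)" by (cases "phi (0, 0, 0, 0)")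
  have "phi (mc_add (0, 0, 0, 0) (0, 0, 0, 0)) = mc_add (phi (0, 0, 0, 0)) (phi (0, 0, 0, 0))"
    using assms unfolding mc_ring_iso_def by blast
  hence "(a, b, c, d) = (a + a, b + b, c + c, d + d)" using img by (simp add: mc_add_def)
  thus ?thesis using img by simp
qed

text \<open>If the diagonal rings have only trivial idempotents, every idempotent of
  the Morita context ring other than 0 and 1 has diagonal (1,0) or (0,1):
  the diagonal entries are idempotent, and the diagonals (0,0) and (1,1) force
  the off-diagonal entries to vanish.\<close>
lemma mc_idempotent_diagonal:
  fixes r :: "'r::ring_1" and s :: "'s::ring_1"
    and m :: "'m::ab_group_add" and k :: "'n::ab_group_add"
  assumes "only_trivial_idempotents TYPE('r)" "only_trivial_idempotents TYPE('s)"
    and M: "bimodule lmM rmM" and N: "bimodule lmN rmN"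
    and idem: "mc_mult lmM rmM lmN rmN (r, m, k, s) (r, m, k, s) = (r, m, k, s)"
    and nonzero: "(r, m, k, s) \<noteq> (0, 0, 0, 0)" and nonone: "(r, m, k, s) \<noteq> mc_one"
  shows "(r = 1 \<and> s = 0) \<or> (r = 0 \<and> s = 1)"
proof -
  have entries: "r * r = r" "lmM r m + rmM m s = m" "rmN k r + lmN s k = k" "s * s = s"
    using idem by (simp_all add: mc_mult_def)
  have r01: "r = 0 \<or> r = 1" and s01: "s = 0 \<or> s = 1"
    using assms(1,2) entries unfolding only_trivial_idempotents_def by auto
  have "\<not> (r = 0 \<and> s = 0)"
  proof
    assume "r = 0 \<and> s = 0"
    with entries have "m = 0" "k = 0" by (simp_all add: bimodule_zero_one[OF M] bimodule_zero_one[OF N])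
    with \<open>r = 0 \<and> s = 0\<close> nonzero show False by simp
  qed
  moreover have "\<not> (r = 1 \<and> s = 1)"
  proof
    assume "r = 1 \<and> s = 1"
    with entries have "m = 0" "k = 0" by (simp_all add: bimodule_zero_one[OF M] bimodule_zero_one[OF N])
    with \<open>r = 1 \<and> s = 1\<close> nonone show False by (simp add: mc_one_def)
  qed
  ultimately show ?thesis using r01 s01 by blast
qed

lemma mc_absorbed_by_upper_idempotent:
  assumes M: "bimodule lmM rmM" and N: "bimodule lmN rmN"
    and left: "mc_mult lmM rmM lmN rmN (1, m, k, 0) (p, q, y, t) = (0, 0, 0, 0)"
    and right: "mc_mult lmM rmM lmN rmN (p, q, y, t) (1, m, k, 0) = (p, q, y, t)"
  shows "p = 0 \<and> q = 0 \<and> t = 0"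
proof -
  note laws = bimodule_zero_one[OF M] bimodule_zero_one[OF N]
  have "p = 0" "q + rmM m t = 0" using left by (simp_all add: mc_mult_def laws)
  moreover have "t = 0" using right by (simp add: mc_mult_def laws)
  ultimately show ?thesis by (simp add: laws)
qed

lemma mc_absorbed_by_lower_idempotent:
  assumes M: "bimodule lmM rmM" and N: "bimodule lmN rmN"
    and left: "mc_mult lmM rmM lmN rmN (0, m, k, 1) (p, u, y, t) = (0, 0, 0, 0)"
    and right: "mc_mult lmM rmM lmN rmN (p, u, y, t) (0, m, k, 1) = (p, u, y, t)"
  shows "p = 0 \<and> y = 0 \<and> t = 0"
proof -
  note laws = bimodule_zero_one[OF M] bimodule_zero_one[OF N]
  have "t = 0" "rmN k p + y = 0" using left by (simp_all add: mc_mult_def laws)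
  moreover have "p = 0" using right by (simp add: mc_mult_def laws)
  ultimately show ?thesis by (simp add: laws)
qed

lemma mc_ring_iso_matrix_unit:
  assumes M: "bimodule lmM rmM" and N: "bimodule lmN rmN"
    and iso: "mc_ring_iso lmM rmM lmN rmN lmM' rmM' lmN' rmN' phi"
  defines "E \<equiv> (1, 0, 0, 0)"
  shows "mc_mult lmM' rmM' lmN' rmN' (phi E) (phi E) = phi E"
    and "phi E \<noteq> (0, 0, 0, 0)" and "phi E \<noteq> mc_one"
    and "mc_mult lmM' rmM' lmN' rmN' (phi E) (phi (0, 0, n, 0)) = (0, 0, 0, 0)"
    and "mc_mult lmM' rmM' lmN' rmN' (phi (0, 0, n, 0)) (phi E) = phi (0, 0, n, 0)"
    and "phi (1, 0, n, 0) = mc_add (phi E) (phi (0, 0, n, 0))"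
proof -
  note laws = bimodule_zero_one[OF M] bimodule_zero_one[OF N]
  have inj: "inj phi"
    and add: "\<And>A B. phi (mc_add A B) = mc_add (phi A) (phi B)"
    and mult: "\<And>A B. phi (mc_mult lmM rmM lmN rmN A B) = mc_mult lmM' rmM' lmN' rmN' (phi A) (phi B)"
    and one: "phi mc_one = mc_one"
    using iso unfolding mc_ring_iso_def bij_def by auto
  note zero = mc_ring_iso_zero[OF iso]
  have "mc_mult lmM rmM lmN rmN E E = E" by (simp add: E_def mc_mult_def laws)
  thus "mc_mult lmM' rmM' lmN' rmN' (phi E) (phi E) = phi E" by (metis mult)
  have "phi E \<noteq> phi (0, 0, 0, 0)" "phi E \<noteq> phi mc_one"
    using inj_eq[OF inj] by (simp_all add: E_def mc_one_def)
  thus "phi E \<noteq> (0, 0, 0, 0)" "phi E \<noteq> mc_one" using zero one by simp_all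
  have "mc_mult lmM rmM lmN rmN E (0, 0, n, 0) = (0, 0, 0, 0)"
    by (simp add: E_def mc_mult_def laws)
  thus "mc_mult lmM' rmM' lmN' rmN' (phi E) (phi (0, 0, n, 0)) = (0, 0, 0, 0)"
    by (metis mult zero)
  have "mc_mult lmM rmM lmN rmN (0, 0, n, 0) E = (0, 0, n, 0)"
    by (simp add: E_def mc_mult_def laws)
  thus "mc_mult lmM' rmM' lmN' rmN' (phi (0, 0, n, 0)) (phi E) = phi (0, 0, n, 0)"
    by (metis mult)
  have "(1, 0, n, 0) = mc_add E (0, 0, n, 0)" by (simp add: E_def mc_add_def)
  thus "phi (1, 0, n, 0) = mc_add (phi E) (phi (0, 0, n, 0))" by (simp add: add)
qed

theorem proposition4p4:
  fixes lmM :: "'r::ring_1 \<Rightarrow> 'm::ab_group_add \<Rightarrow> 'm"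
    and rmM :: "'m \<Rightarrow> 's::ring_1 \<Rightarrow> 'm"
    and lmN :: "'s \<Rightarrow> 'n::ab_group_add \<Rightarrow> 'n"
    and rmN :: "'n \<Rightarrow> 'r \<Rightarrow> 'n"
    and lmM' :: "'r2::ring_1 \<Rightarrow> 'm2::ab_group_add \<Rightarrow> 'm2"
    and rmM' :: "'m2 \<Rightarrow> 's2::ring_1 \<Rightarrow> 'm2"
    and lmN' :: "'s2 \<Rightarrow> 'n2::ab_group_add \<Rightarrow> 'n2"
    and rmN' :: "'n2 \<Rightarrow> 'r2 \<Rightarrow> 'n2"
    and phi :: "('r \<times> 'm \<times> 'n \<times> 's) \<Rightarrow> ('r2 \<times> 'm2 \<times> 'n2 \<times> 's2)"
  assumes "only_trivial_idempotents TYPE('r)"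
    and "only_trivial_idempotents TYPE('s)"
    and "only_trivial_idempotents TYPE('r2)"
    and "only_trivial_idempotents TYPE('s2)"
    and "bimodule lmM rmM"
    and "bimodule lmN rmN"
    and "bimodule lmM' rmM'"
    and "bimodule lmN' rmN'"
    and "mc_ring_iso lmM rmM lmN rmN lmM' rmM' lmN' rmN' phi"
  shows "(\<exists>a1 :: 'm2. \<exists>v1 :: 'n \<Rightarrow> 'n2. \<forall>n. phi (1, 0, n, 0) = (1, a1, v1 n, 0))
       \<or> (\<exists>b2 :: 'n2. \<exists>u2 :: 'n \<Rightarrow> 'm2. \<forall>n. phi (1, 0, n, 0) = (0, u2 n, b2, 1))"
proof -
  obtain r m k s where img_E: "phi (1, 0, 0, 0) = (r, m, k, s)" by (cases "phi (1, 0, 0, 0)")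
  note unit = mc_ring_iso_matrix_unit[OF assms(5,6,9)]
  have "(r = 1 \<and> s = 0) \<or> (r = 0 \<and> s = 1)"
    using mc_idempotent_diagonal[OF assms(3,4,7,8)] unit(1-3) img_E by simp
  thus ?thesis
  proof
    assume diag: "r = 1 \<and> s = 0"
    have "\<forall>n. \<exists>y. phi (0, 0, n, 0) = (0, 0, y, 0)"
      using mc_absorbed_by_upper_idempotent[OF assms(7,8)] unit(4,5) img_E diag
      by (metis prod_cases4)
    then obtain v where "\<And>n. phi (0, 0, n, 0) = (0, 0, v n, 0)" by metis
    hence "\<forall>n. phi (1, 0, n, 0) = (1, m, k + v n, 0)"
      using unit(6) img_E diag by (simp add: mc_add_def)
    thus ?thesis by (intro disjI1 exI[of _ m] exI[of _ "\<lambda>n. k + v n"])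
  next
    assume diag: "r = 0 \<and> s = 1"
    have "\<forall>n. \<exists>u. phi (0, 0, n, 0) = (0, u, 0, 0)"
      using mc_absorbed_by_lower_idempotent[OF assms(7,8)] unit(4,5) img_E diag
      by (metis prod_cases4)
    then obtain u where "\<And>n. phi (0, 0, n, 0) = (0, u n, 0, 0)" by metis
    hence "\<forall>n. phi (1, 0, n, 0) = (0, m + u n, k, 1)"
      using unit(6) img_E diag by (simp add: mc_add_def)
    thus ?thesis by (intro disjI2 exI[of _ k] exI[of _ "\<lambda>n. m + u n"])
  qed
qed

end
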